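(* $\mathsf{sjfCQ}(\mathsf{TI}_{\mathsf{fin}})=\mathsf{CQ}(\mathsf{TI}_{\mathsf{fin}})=\mathsf{UCQ}(\mathsf{TI}_{\mathsf{fin}})$.
   Context: Fix a countably infinite universe $U$. A database schema is a finite nonempty set of relation symbols with arities; facts are $R(u_1,\dots,u_{\mathrm{ar}(R)})$ with $u_i\in U$; an instance is a finite set of facts; $\mathrm{adom}(D)$ is the set of elements of $U$ occurring in $D$. A probabilistic database (PDB) is a discrete probability space $(\mathbb D,P)$ with $\mathbb D$ a nonempty countable set of instances; it is finite if $\mathbb D$ is finite. A PDB is tuple-independent if for all pairwise distinct facts $f_1,\dots,f_k$, $\Pr(f_1\in I,\dots,f_k\in I)=\prod_i\Pr(f_i\in I)$; $\mathsf{TI}_{\mathsf{fin}}$ is the class of finite tuple-independent PDBs. Formulas use relational atoms $R(\bar u)$ ($\bar u$ variables or constants) and equality atoms and are evaluated under active domain semantics. A conjunctive query (CQ) is built from atoms using only $\exists,\wedge$; it is self-join free (sjfCQ) if each relation symbol occurs at most once; a union of conjunctive queries (UCQ) is built using only $\exists,\wedge,\vee$. An $\mathsf L$-view consists of one $\mathsf L$-formula $\Phi_R(x_1,\dots,x_{\mathrm{ar}(R)})$ per output relation $R$, mapping $D$ to the instance of all $R(\bar a)$ with $\bar a$ over $\mathrm{adom}(D)\cup\mathrm{adom}(\Phi_R)$ and $D\models\Phi_R[\bar a]$. The image of a PDB $(\mathbb D,P)$ under a view $V$ is the PDB on $V(\mathbb D)$ with $P'(\{D'\})=P(\{D:V(D)=D'\})$;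 $\mathsf L(\mathsf{TI}_{\mathsf{fin}})$ is the class of images of finite TI-PDBs under $\mathsf L$-views. *)

theory Defs
  imports "HOL-Probability.Probability"
begin

(* Universe U: the natural numbers (a fixed countably infinite set).
   A relation symbol is a pair (name, arity). *)
type_synonym rel = "nat \<times> nat"

definition arity :: "rel \<Rightarrow> nat" where "arity R = snd R"

type_synonym fact = "rel \<times> nat list"
type_synonym inst = "fact set"

definition schema :: "rel set \<Rightarrow> bool" where
  "schema \<tau> \<longleftrightarrow> finite \<tau> \<and> \<tau> \<noteq> {}"

definition fact_over :: "rel set \<Rightarrow> fact \<Rightarrow> bool" where
  "fact_over \<tau> f \<longleftrightarrow> fst f \<in> \<tau> \<and> length (snd f) = arity (fst f)"

definition instance_over :: "rel set \<Rightarrow> inst \<Rightarrow> bool" where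
  "instance_over \<tau> D \<longleftrightarrow> finite D \<and> (\<forall>f\<in>D. fact_over \<tau> f)"

definition adom :: "inst \<Rightarrow> nat set" where
  "adom D = (\<Union>f\<in>D. set (snd f))"

definition pdb :: "rel set \<Rightarrow> inst set \<Rightarrow> inst pmf \<Rightarrow> bool" where
  "pdb \<tau> \<D> P \<longleftrightarrow> schema \<tau> \<and> \<D> \<noteq> {} \<and> countable \<D> \<and> (\<forall>D\<in>\<D>. instance_over \<tau> D)
      \<and> set_pmf P \<subseteq> \<D>"

definition tuple_independent :: "inst pmf \<Rightarrow> bool" where
  "tuple_independent P \<longleftrightarrow>
     (\<forall>F::fact set. finite F \<longrightarrow>
        measure_pmf.prob P {I. F \<subseteq> I} = (\<Prod>f\<in>F. measure_pmf.prob P {I. f \<in> I}))"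

definition ti_fin :: "rel set \<Rightarrow> inst set \<Rightarrow> inst pmf \<Rightarrow> bool" where
  "ti_fin \<tau> \<D> P \<longleftrightarrow> pdb \<tau> \<D> P \<and> finite \<D> \<and> tuple_independent P"

datatype trm = Var nat | Cst nat

datatype fml = Atom rel "trm list" | Equ trm trm | Neg fml | Conj fml fml | Disj fml fml
  | Exists nat fml

fun eval_trm :: "(nat \<Rightarrow> nat) \<Rightarrow> trm \<Rightarrow> nat" where
  "eval_trm \<sigma> (Var x) = \<sigma> x"
| "eval_trm \<sigma> (Cst c) = c"

fun trm_csts :: "trm \<Rightarrow> nat set" where
  "trm_csts (Var x) = {}"
| "trm_csts (Cst c) = {c}"

fun trm_vars :: "trm \<Rightarrow> nat set" where
  "trm_vars (Var x) = {x}"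
| "trm_vars (Cst c) = {}"

fun fml_consts :: "fml \<Rightarrow> nat set" where
  "fml_consts (Atom R ts) = (\<Union>t\<in>set ts. trm_csts t)"
| "fml_consts (Equ s t) = trm_csts s \<union> trm_csts t"
| "fml_consts (Neg \<phi>) = fml_consts \<phi>"
| "fml_consts (Conj \<phi> \<psi>) = fml_consts \<phi> \<union> fml_consts \<psi>"
| "fml_consts (Disj \<phi> \<psi>) = fml_consts \<phi> \<union> fml_consts \<psi>"
| "fml_consts (Exists x \<phi>) = fml_consts \<phi>"

fun fv :: "fml \<Rightarrow> nat set" where
  "fv (Atom R ts) = (\<Union>t\<in>set ts. trm_vars t)"
| "fv (Equ s t) = trm_vars s \<union> trm_vars t"
| "fv (Neg \<phi>) = fv \<phi>"
| "fv (Conj \<phi> \<psi>) = fv \<phi> \<union> fv \<psi>"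
| "fv (Disj \<phi> \<psi>) = fv \<phi> \<union> fv \<psi>"
| "fv (Exists x \<phi>) = fv \<phi> - {x}"

fun rels :: "fml \<Rightarrow> rel list" where
  "rels (Atom R ts) = [R]"
| "rels (Equ s t) = []"
| "rels (Neg \<phi>) = rels \<phi>"
| "rels (Conj \<phi> \<psi>) = rels \<phi> @ rels \<psi>"
| "rels (Disj \<phi> \<psi>) = rels \<phi> @ rels \<psi>"
| "rels (Exists x \<phi>) = rels \<phi>"

fun wf_fml :: "rel set \<Rightarrow> fml \<Rightarrow> bool" where
  "wf_fml \<tau> (Atom R ts) \<longleftrightarrow> R \<in> \<tau> \<and> length ts = arity R"
| "wf_fml \<tau> (Equ s t) \<longleftrightarrow> True"
| "wf_fml \<tau> (Neg \<phi>) \<longleftrightarrow> wf_fml \<tau> \<phi>"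
| "wf_fml \<tau> (Conj \<phi> \<psi>) \<longleftrightarrow> wf_fml \<tau> \<phi> \<and> wf_fml \<tau> \<psi>"
| "wf_fml \<tau> (Disj \<phi> \<psi>) \<longleftrightarrow> wf_fml \<tau> \<phi> \<and> wf_fml \<tau> \<psi>"
| "wf_fml \<tau> (Exists x \<phi>) \<longleftrightarrow> wf_fml \<tau> \<phi>"

(* satisfaction; quantifiers range over the set A (active domain) *)
fun sat :: "nat set \<Rightarrow> inst \<Rightarrow> (nat \<Rightarrow> nat) \<Rightarrow> fml \<Rightarrow> bool" where
  "sat A D \<sigma> (Atom R ts) \<longleftrightarrow> (R, map (eval_trm \<sigma>) ts) \<in> D"
| "sat A D \<sigma> (Equ s t) \<longleftrightarrow> eval_trm \<sigma> s = eval_trm \<sigma> t"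
| "sat A D \<sigma> (Neg \<phi>) \<longleftrightarrow> \<not> sat A D \<sigma> \<phi>"
| "sat A D \<sigma> (Conj \<phi> \<psi>) \<longleftrightarrow> sat A D \<sigma> \<phi> \<and> sat A D \<sigma> \<psi>"
| "sat A D \<sigma> (Disj \<phi> \<psi>) \<longleftrightarrow> sat A D \<sigma> \<phi> \<or> sat A D \<sigma> \<psi>"
| "sat A D \<sigma> (Exists x \<phi>) \<longleftrightarrow> (\<exists>a\<in>A. sat A D (\<sigma>(x := a)) \<phi>)"

fun is_cq :: "fml \<Rightarrow> bool" where
  "is_cq (Atom R ts) = True"
| "is_cq (Equ s t) = True"
| "is_cq (Neg \<phi>) = False"
| "is_cq (Conj \<phi> \<psi>) = (is_cq \<phi> \<and> is_cq \<psi>)"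
| "is_cq (Disj \<phi> \<psi>) = False"
| "is_cq (Exists x \<phi>) = is_cq \<phi>"

definition is_sjfcq :: "fml \<Rightarrow> bool" where
  "is_sjfcq \<phi> \<longleftrightarrow> is_cq \<phi> \<and> distinct (rels \<phi>)"

fun is_ucq :: "fml \<Rightarrow> bool" where
  "is_ucq (Atom R ts) = True"
| "is_ucq (Equ s t) = True"
| "is_ucq (Neg \<phi>) = False"
| "is_ucq (Conj \<phi> \<psi>) = (is_ucq \<phi> \<and> is_ucq \<psi>)"
| "is_ucq (Disj \<phi> \<psi>) = (is_ucq \<phi> \<and> is_ucq \<psi>)"
| "is_ucq (Exists x \<phi>) = is_ucq \<phi>"

(* A view from schema tau to output schema tau': for each output symbol R a formula
   Phi_R(x_1,...,x_ar(R)) given as (list of distinct free variables, formula). *)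
type_synonym view = "rel \<Rightarrow> nat list \<times> fml"

definition is_view :: "(fml \<Rightarrow> bool) \<Rightarrow> rel set \<Rightarrow> rel set \<Rightarrow> view \<Rightarrow> bool" where
  "is_view L \<tau> \<tau>' V \<longleftrightarrow> schema \<tau>' \<and>
     (\<forall>R\<in>\<tau>'. length (fst (V R)) = arity R \<and> distinct (fst (V R)) \<and>
        fv (snd (V R)) \<subseteq> set (fst (V R)) \<and> wf_fml \<tau> (snd (V R)) \<and> L (snd (V R)))"

definition assign :: "nat list \<Rightarrow> nat list \<Rightarrow> nat \<Rightarrow> nat" where
  "assign xs as v = (case map_of (zip xs as) v of Some a \<Rightarrow> a | None \<Rightarrow> 0)"

definition apply_view :: "rel set \<Rightarrow> view \<Rightarrow> inst \<Rightarrow> inst" where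
  "apply_view \<tau>' V D =
     {(R, as) | R as. R \<in> \<tau>' \<and> length as = arity R \<and>
        set as \<subseteq> adom D \<union> fml_consts (snd (V R)) \<and>
        sat (adom D \<union> fml_consts (snd (V R))) D (assign (fst (V R)) as) (snd (V R))}"

(* L(TI_fin): images of finite TI-PDBs under L-views; a PDB is recorded as
   (schema, set of instances, probability distribution). *)
definition L_TI_fin :: "(fml \<Rightarrow> bool) \<Rightarrow> (rel set \<times> inst set \<times> inst pmf) set" where
  "L_TI_fin L = {(\<tau>', apply_view \<tau>' V ` \<D>, map_pmf (apply_view \<tau>' V) P) | \<tau>' \<tau> \<D> P V.
      ti_fin \<tau> \<D> P \<and> is_view L \<tau> \<tau>' V}"

end

theory Submission
  imports Defs
begin

text \<open>
  A UCQ view is monotone, so on a finite PDB it outputs \<open>R(a)\<close> in world \<open>D\<close> iff some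
  world \<open>M \<subseteq> D\<close> of the PDB outputs it in \<open>M\<close>. This can be tabulated. List the finitely many
  facts \<open>f\<^sub>1, \<dots>, f\<^sub>n\<close> of the PDB and encode a world \<open>D\<close> by
  \<^item> the deterministic facts \<open>S\<^sub>i(0)\<close> and \<open>T\<^sub>R(a, \<chi>\<^sub>M)\<close> whenever \<open>R(a)\<close> is an output
    in the world \<open>M\<close>, where \<open>\<chi>\<^sub>M \<in> {0,1}\<^sup>n\<close> is the indicator vector of \<open>M\<close>;
  \<^item> the fact \<open>S\<^sub>i(1)\<close> for every \<open>f\<^sub>i \<in> D\<close>.
  Then \<open>R(x) = \<exists>y. S\<^sub>1(y\<^sub>1) \<and> \<dots> \<and> S\<^sub>n(y\<^sub>n) \<and> T\<^sub>R(x, y)\<close> is a self-join free CQ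
  that recovers the original view, since \<open>S\<^sub>i(y\<^sub>i)\<close> forces \<open>y\<^sub>i = 0\<close> unless \<open>f\<^sub>i \<in> D\<close>.
  The encoded PDB is tuple-independent: it is an injective copy of the original one
  together with deterministic facts.
\<close>

lemma is_ucq_if_is_cq: "is_cq \<phi> \<Longrightarrow> is_ucq \<phi>"
  by (induction \<phi>) auto

lemma L_TI_fin_mono: "(\<And>\<phi>. L \<phi> \<Longrightarrow> L' \<phi>) \<Longrightarrow> L_TI_fin L \<subseteq> L_TI_fin L'"
  unfolding L_TI_fin_def is_view_def by blast

lemma sat_ucq_mono:
  "sat A D \<sigma> \<phi> \<Longrightarrow> is_ucq \<phi> \<Longrightarrow> A \<subseteq> A' \<Longrightarrow> D \<subseteq> D' \<Longrightarrow> sat A' D' \<sigma> \<phi>"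
  by (induction \<phi> arbitrary: \<sigma>) auto

lemma adom_mono: "D \<subseteq> D' \<Longrightarrow> adom D \<subseteq> adom D'"
  unfolding adom_def by auto

lemma adomI: "f \<in> D \<Longrightarrow> a \<in> set (snd f) \<Longrightarrow> a \<in> adom D"
  unfolding adom_def by auto

lemma mem_apply_view_iff:
  "(R, as) \<in> apply_view \<tau>' V D \<longleftrightarrow> R \<in> \<tau>' \<and> length as = arity R \<and>
     set as \<subseteq> adom D \<union> fml_consts (snd (V R)) \<and>
     sat (adom D \<union> fml_consts (snd (V R))) D (assign (fst (V R)) as) (snd (V R))"
  unfolding apply_view_def by blast

lemma apply_view_ucq_mono:
  assumes "is_view is_ucq \<tau> \<tau>' V" and "D \<subseteq> D'"
  shows "apply_view \<tau>' V D \<subseteq> apply_view \<tau>' V D'"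
proof -
  have "adom D \<union> fml_consts (snd (V R)) \<subseteq> adom D' \<union> fml_consts (snd (V R))" for R
    using adom_mono[OF assms(2)] by blast
  moreover have "is_ucq (snd (V R))" if "R \<in> \<tau>'" for R
    using assms(1) that unfolding is_view_def by blast
  ultimately show ?thesis
    using assms(2) unfolding apply_view_def by (blast intro: sat_ucq_mono)
qed

lemma finite_fml_consts: "finite (fml_consts \<phi>)"
proof -
  have "finite (trm_csts t)" for t by (cases t) auto
  then show ?thesis by (induction \<phi>) auto
qed

lemma finite_adom: "finite D \<Longrightarrow> finite (adom D)"
  unfolding adom_def by auto

lemma finite_apply_view:
  assumes "finite \<tau>'" and "finite D"
  shows "finite (apply_view \<tau>' V D)"
proof -
  let ?B = "\<Union>R\<in>\<tau>'. Pair R ` {as. set as \<subseteq> adom D \<union> fml_consts (snd (V R)) \<and> length as = arity R}"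
  have "finite ?B"
    using assms finite_adom finite_fml_consts
    by (intro finite_UN_I) (auto intro!: finite_lists_length_eq)
  moreover have "apply_view \<tau>' V D \<subseteq> ?B" unfolding apply_view_def by auto
  ultimately show ?thesis by (rule finite_subset[rotated])
qed

lemma foldr_Exists_simps [simp]:
  "fv (foldr Exists ys \<phi>) = fv \<phi> - set ys"
  "rels (foldr Exists ys \<phi>) = rels \<phi>"
  "is_cq (foldr Exists ys \<phi>) = is_cq \<phi>"
  "wf_fml \<tau> (foldr Exists ys \<phi>) = wf_fml \<tau> \<phi>"
  "fml_consts (foldr Exists ys \<phi>) = fml_consts \<phi>"
  by (induction ys) auto

lemma foldr_Conj_simps [simp]:
  "sat A D \<sigma> (foldr Conj ps \<psi>) \<longleftrightarrow> (\<forall>\<phi>\<in>set ps. sat A D \<sigma> \<phi>) \<and> sat A D \<sigma> \<psi>"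
  "fv (foldr Conj ps \<psi>) = (\<Union>\<phi>\<in>set ps. fv \<phi>) \<union> fv \<psi>"
  "rels (foldr Conj ps \<psi>) = concat (map rels ps) @ rels \<psi>"
  "is_cq (foldr Conj ps \<psi>) \<longleftrightarrow> (\<forall>\<phi>\<in>set ps. is_cq \<phi>) \<and> is_cq \<psi>"
  "wf_fml \<tau> (foldr Conj ps \<psi>) \<longleftrightarrow> (\<forall>\<phi>\<in>set ps. wf_fml \<tau> \<phi>) \<and> wf_fml \<tau> \<psi>"
  "fml_consts (foldr Conj ps \<psi>) = (\<Union>\<phi>\<in>set ps. fml_consts \<phi>) \<union> fml_consts \<psi>"
  by (induction ps) auto

lemma assign_upt_nth: "length as = k \<Longrightarrow> v < k \<Longrightarrow> assign [0..<k] as v = as ! v"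
  unfolding assign_def using map_of_zip_nth[of "[0..<k]" as v] by simp

lemma map_assign_upt: "length as = k \<Longrightarrow> map (assign [0..<k] as) [0..<k] = as"
  by (intro nth_equalityI) (simp_all add: assign_upt_nth)

lemma sat_foldr_Exists:
  "sat A D \<sigma> (foldr Exists ys \<phi>) \<longleftrightarrow>
     (\<exists>\<tau>. (\<forall>v. v \<notin> set ys \<longrightarrow> \<tau> v = \<sigma> v) \<and> (\<forall>v\<in>set ys. \<tau> v \<in> A) \<and> sat A D \<tau> \<phi>)"
proof (induction ys arbitrary: \<sigma>)
  case Nil
  then show ?case by (simp flip: fun_eq_iff)
next
  case (Cons y ys)
  show ?case
  proof
    assume "sat A D \<sigma> (foldr Exists (y # ys) \<phi>)"
    then obtain a \<tau> where a: "a \<in> A" and \<tau>: "\<forall>v. v \<notin> set ys \<longrightarrow> \<tau> v = (\<sigma>(y := a)) v"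
      "\<forall>v\<in>set ys. \<tau> v \<in> A" "sat A D \<tau> \<phi>"
      using Cons.IH by auto
    moreover have "\<tau> y \<in> A"
      using a \<tau> by (cases "y \<in> set ys") auto
    ultimately show "\<exists>\<tau>. (\<forall>v. v \<notin> set (y # ys) \<longrightarrow> \<tau> v = \<sigma> v) \<and>
        (\<forall>v\<in>set (y # ys). \<tau> v \<in> A) \<and> sat A D \<tau> \<phi>"
      by (intro exI[of _ \<tau>]) auto
  next
    assume "\<exists>\<tau>. (\<forall>v. v \<notin> set (y # ys) \<longrightarrow> \<tau> v = \<sigma> v) \<and>
        (\<forall>v\<in>set (y # ys). \<tau> v \<in> A) \<and> sat A D \<tau> \<phi>"
    then obtain \<tau> where "\<forall>v. v \<notin> set (y # ys) \<longrightarrow> \<tau> v = \<sigma> v"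
      and "\<forall>v\<in>set (y # ys). \<tau> v \<in> A" and "sat A D \<tau> \<phi>"
      by blast
    then have "sat A D (\<sigma>(y := \<tau> y)) (foldr Exists ys \<phi>)"
      unfolding Cons.IH by (intro exI[of _ \<tau>]) auto
    then show "sat A D \<sigma> (foldr Exists (y # ys) \<phi>)"
      using \<open>\<forall>v\<in>set (y # ys). \<tau> v \<in> A\<close> by auto
  qed
qed

lemma tuple_independent_map_image:
  assumes ti: "tuple_independent P" and "inj h"
  shows "tuple_independent (map_pmf ((`) h) P)"
  unfolding tuple_independent_def
proof (intro allI impI)
  fix F :: "fact set" assume "finite F"
  let ?q = "\<lambda>g. measure_pmf.prob P {D. g \<in> h ` D}"
  have mem: "h f \<in> h ` D \<longleftrightarrow> f \<in> D" for f D
    using \<open>inj h\<close> by (rule inj_image_mem_iff)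
  have "measure_pmf.prob P {D. F \<subseteq> h ` D} = prod ?q F"
  proof (cases "F \<subseteq> range h")
    case True
    define G where "G = h -` F"
    have "finite G" using \<open>finite F\<close> \<open>inj h\<close> unfolding G_def by (simp add: finite_vimageI)
    have F: "F = h ` G" using True unfolding G_def by blast
    have "{D. F \<subseteq> h ` D} = {D. G \<subseteq> D}"
      unfolding F using \<open>inj h\<close> by (simp add: inj_image_subset_iff)
    then have "measure_pmf.prob P {D. F \<subseteq> h ` D} = (\<Prod>f\<in>G. measure_pmf.prob P {D. f \<in> D})"
      using ti \<open>finite G\<close> unfolding tuple_independent_def by simp
    also have "\<dots> = (\<Prod>f\<in>G. ?q (h f))" by (simp add: mem)
    also have "\<dots> = prod ?q F"
      unfolding F using \<open>inj h\<close> by (simp add: prod.reindex inj_on_subset)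
    finally show ?thesis .
  next
    case False
    then obtain g where "g \<in> F" "g \<notin> range h" by blast
    then have "{D. F \<subseteq> h ` D} = {}" and "{D. g \<in> h ` D} = {}" by auto
    then have "{D. F \<subseteq> h ` D} = {}" and "?q g = 0" by simp_all
    then show ?thesis using \<open>finite F\<close> \<open>g \<in> F\<close> by (auto intro: prod_zero)
  qed
  then show "measure_pmf.prob (map_pmf ((`) h) P) {I. F \<subseteq> I} =
      (\<Prod>f\<in>F. measure_pmf.prob (map_pmf ((`) h) P) {I. f \<in> I})"
    by (simp add: vimage_def)
qed

lemma tuple_independent_map_union:
  assumes ti: "tuple_independent P"
  shows "tuple_independent (map_pmf ((\<union>) C) P)"
  unfolding tuple_independent_def
proof (intro allI impI)
  fix F :: "fact set" assume "finite F"
  let ?q = "\<lambda>g. measure_pmf.prob P {D. g \<in> C \<union> D}"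
  have "{D. F \<subseteq> C \<union> D} = {D. F - C \<subseteq> D}" by blast
  then have "measure_pmf.prob P {D. F \<subseteq> C \<union> D} = (\<Prod>f\<in>F - C. measure_pmf.prob P {D. f \<in> D})"
    using ti \<open>finite F\<close> unfolding tuple_independent_def by simp
  also have "\<dots> = prod ?q (F - C)" by (intro prod.cong) auto
  also have "\<dots> = prod ?q F"
    by (rule prod.mono_neutral_left) (use \<open>finite F\<close> in auto)
  finally show "measure_pmf.prob (map_pmf ((\<union>) C) P) {I. F \<subseteq> I} =
      (\<Prod>f\<in>F. measure_pmf.prob (map_pmf ((\<union>) C) P) {I. f \<in> I})"
    by (simp add: vimage_def)
qed

text \<open>The symbols \<open>S\<^sub>i = fact_rel f\<^sub>i\<close> and \<open>T\<^sub>R = tagged_rel n R\<close> of the encoding.\<close>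

definition fact_rel :: "fact \<Rightarrow> rel" where
  "fact_rel f = (to_nat (Inl f :: fact + rel), 1)"

definition tagged_rel :: "nat \<Rightarrow> rel \<Rightarrow> rel" where
  "tagged_rel n R = (to_nat (Inr R :: fact + rel), arity R + n)"

lemma fact_rel_eq_iff [simp]: "fact_rel f = fact_rel g \<longleftrightarrow> f = g"
  and tagged_rel_eq_iff [simp]: "tagged_rel n R = tagged_rel n R' \<longleftrightarrow> R = R'"
  and fact_rel_neq_tagged_rel [simp]: "fact_rel f \<noteq> tagged_rel n R" "tagged_rel n R \<noteq> fact_rel f"
  and arity_fact_rel [simp]: "arity (fact_rel f) = 1"
  and arity_tagged_rel [simp]: "arity (tagged_rel n R) = arity R + n"
  unfolding fact_rel_def tagged_rel_def arity_def by auto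

definition indicator_list :: "fact list \<Rightarrow> inst \<Rightarrow> nat list" where
  "indicator_list fs M = map (\<lambda>f. if f \<in> M then 1 else 0) fs"

lemma length_indicator_list [simp]: "length (indicator_list fs M) = length fs"
  by (simp add: indicator_list_def)

definition view_table :: "rel set \<Rightarrow> view \<Rightarrow> inst set \<Rightarrow> fact list \<Rightarrow> inst" where
  "view_table \<tau>' V \<D> fs = {(tagged_rel (length fs) R, as @ indicator_list fs M) | M R as.
     M \<in> \<D> \<and> (R, as) \<in> apply_view \<tau>' V M}"

definition encode :: "rel set \<Rightarrow> view \<Rightarrow> inst set \<Rightarrow> fact list \<Rightarrow> inst \<Rightarrow> inst" where
  "encode \<tau>' V \<D> fs D =
     (\<lambda>f. (fact_rel f, [0])) ` set fs \<union> view_table \<tau>' V \<D> fs \<union> (\<lambda>f. (fact_rel f, [1])) ` D"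

definition encoded_schema :: "rel set \<Rightarrow> fact list \<Rightarrow> rel set" where
  "encoded_schema \<tau>' fs = fact_rel ` set fs \<union> tagged_rel (length fs) ` \<tau>'"

definition sjf_body :: "fact list \<Rightarrow> rel \<Rightarrow> fml" where
  "sjf_body fs R =
     foldr Conj (map (\<lambda>i. Atom (fact_rel (fs ! i)) [Var (arity R + i)]) [0..<length fs])
       (Atom (tagged_rel (length fs) R) (map Var [0..<arity R + length fs]))"

definition sjf_view :: "fact list \<Rightarrow> view" where
  "sjf_view fs R = ([0..<arity R], foldr Exists [arity R..<arity R + length fs] (sjf_body fs R))"

lemma fst_sjf_view [simp]: "fst (sjf_view fs R) = [0..<arity R]"
  and fml_consts_sjf_view [simp]: "fml_consts (snd (sjf_view fs R)) = {}"
  by (simp_all add: sjf_view_def sjf_body_def)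

lemma fact_rel_one_mem_encode: "(fact_rel f, [1]) \<in> encode \<tau>' V \<D> fs D \<longleftrightarrow> f \<in> D"
  unfolding encode_def view_table_def by auto

lemma tagged_rel_mem_encode:
  "(tagged_rel (length fs) R, bs) \<in> encode \<tau>' V \<D> fs D \<longleftrightarrow>
     (\<exists>M\<in>\<D>. \<exists>as. (R, as) \<in> apply_view \<tau>' V M \<and> bs = as @ indicator_list fs M)"
proof
  assume "(tagged_rel (length fs) R, bs) \<in> encode \<tau>' V \<D> fs D"
  then show "\<exists>M\<in>\<D>. \<exists>as. (R, as) \<in> apply_view \<tau>' V M \<and> bs = as @ indicator_list fs M"
    unfolding encode_def view_table_def by auto
qed (unfold encode_def view_table_def, blast)

lemma finite_view_table:
  assumes "finite \<tau>'" and "finite \<D>" and "\<forall>M\<in>\<D>. finite M"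
  shows "finite (view_table \<tau>' V \<D> fs)"
proof (rule finite_subset)
  let ?row = "\<lambda>(M, R, as). (tagged_rel (length fs) R, as @ indicator_list fs M)"
  show "view_table \<tau>' V \<D> fs \<subseteq> ?row ` (SIGMA M:\<D>. apply_view \<tau>' V M)"
    unfolding view_table_def by (auto intro: rev_image_eqI)
  show "finite (?row ` (SIGMA M:\<D>. apply_view \<tau>' V M))"
    using assms by (simp add: finite_apply_view)
qed

lemma map_upt_split_assign:
  assumes "length as = k" and "\<forall>v. v \<notin> set [k..<k + n] \<longrightarrow> \<tau> v = assign [0..<k] as v"
  shows "map \<tau> [0..<k + n] = as @ map \<tau> [k..<k + n]"
proof -
  have "map \<tau> [0..<k] = map (assign [0..<k] as) [0..<k]"
    using assms(2) by (intro map_cong) auto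
  also have "\<dots> = as" using assms(1) by (rule map_assign_upt)
  finally show ?thesis by (simp add: upt_add_eq_append[of 0 k n])
qed

lemma sat_sjf_body:
  "sat A E \<tau> (sjf_body fs R) \<longleftrightarrow>
     (\<forall>i<length fs. (fact_rel (fs ! i), [\<tau> (arity R + i)]) \<in> E) \<and>
     (tagged_rel (length fs) R, map \<tau> [0..<arity R + length fs]) \<in> E"
  unfolding sjf_body_def by (auto simp: comp_def)

lemma sat_sjf_view:
  assumes "length as = arity R"
  shows "sat A E (assign [0..<arity R] as) (snd (sjf_view fs R)) \<longleftrightarrow>
    (\<exists>bs. length bs = length fs \<and> set bs \<subseteq> A \<and>
       (\<forall>i<length fs. (fact_rel (fs ! i), [bs ! i]) \<in> E) \<and> (tagged_rel (length fs) R, as @ bs) \<in> E)"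
    (is "?sat \<longleftrightarrow> ?witness")
proof
  define k n where "k = arity R" and "n = length fs"
  note map_split = map_upt_split_assign[OF assms[folded k_def]]
  {
    assume ?sat
    then obtain \<tau> where off: "\<forall>v. v \<notin> set [k..<k + n] \<longrightarrow> \<tau> v = assign [0..<k] as v"
      and "\<forall>v\<in>set [k..<k + n]. \<tau> v \<in> A" and "sat A E \<tau> (sjf_body fs R)"
      unfolding sjf_view_def snd_conv sat_foldr_Exists k_def n_def by blast
    then show ?witness
      using map_split[OF off]
      by (intro exI[of _ "map \<tau> [k..<k + n]"]) (auto simp: sat_sjf_body k_def n_def)
  next
    assume ?witness
    then obtain bs where bs: "length bs = n" "set bs \<subseteq> A"
      "\<forall>i<n. (fact_rel (fs ! i), [bs ! i]) \<in> E" "(tagged_rel n R, as @ bs) \<in> E"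
      unfolding n_def by blast
    define \<tau> where "\<tau> v = (if k \<le> v \<and> v < k + n then bs ! (v - k) else assign [0..<k] as v)" for v
    have off: "\<forall>v. v \<notin> set [k..<k + n] \<longrightarrow> \<tau> v = assign [0..<k] as v" by (simp add: \<tau>_def)
    have map_bs: "map \<tau> [k..<k + n] = bs" using bs(1) by (intro nth_equalityI) (simp_all add: \<tau>_def)
    moreover have "\<tau> (k + i) = bs ! i" if "i < n" for i using that by (simp add: \<tau>_def)
    ultimately have "sat A E \<tau> (sjf_body fs R)"
      using bs map_split[OF off] by (simp add: sat_sjf_body k_def n_def)
    moreover have "\<forall>v\<in>set [k..<k + n]. \<tau> v \<in> A"
      using bs(2) unfolding map_bs[symmetric] by auto
    ultimately show ?sat
      unfolding sjf_view_def snd_conv sat_foldr_Exists k_def[symmetric] n_def[symmetric]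
      using off by blast
  }
qed

lemma mem_apply_sjf_view_encodeD:
  assumes "\<Union>\<D> \<subseteq> set fs" and "(R, as) \<in> apply_view \<tau>' (sjf_view fs) (encode \<tau>' V \<D> fs D)"
  shows "\<exists>M\<in>\<D>. M \<subseteq> D \<and> (R, as) \<in> apply_view \<tau>' V M"
proof -
  let ?E = "encode \<tau>' V \<D> fs D"
  have R: "R \<in> \<tau>'" "length as = arity R"
    and "sat (adom ?E) ?E (assign [0..<arity R] as) (snd (sjf_view fs R))"
    using assms(2) by (simp_all add: mem_apply_view_iff)
  then obtain bs where bs: "\<forall>i<length fs. (fact_rel (fs ! i), [bs ! i]) \<in> ?E"
    "(tagged_rel (length fs) R, as @ bs) \<in> ?E"
    unfolding sat_sjf_view[OF R(2)] by blast
  then obtain M as' where M: "M \<in> \<D>" "(R, as') \<in> apply_view \<tau>' V M"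
    and "as @ bs = as' @ indicator_list fs M"
    unfolding tagged_rel_mem_encode by blast
  moreover have "length as' = length as" using M(2) R(2) by (simp add: mem_apply_view_iff)
  ultimately have "as' = as" and bs_M: "bs = indicator_list fs M" by simp_all
  have "M \<subseteq> D"
  proof
    fix f assume "f \<in> M"
    then obtain i where i: "i < length fs" "fs ! i = f"
      using M(1) assms(1) by (metis Union_iff in_set_conv_nth subsetD)
    then have "bs ! i = 1" using \<open>f \<in> M\<close> by (simp add: bs_M indicator_list_def)
    then have "(fact_rel f, [1]) \<in> ?E" using bs(1) i by metis
    then show "f \<in> D" by (simp only: fact_rel_one_mem_encode)
  qed
  then show ?thesis using M \<open>as' = as\<close> by blast
qed

lemma mem_apply_sjf_view_encodeI:
  assumes M: "M \<in> \<D>" "M \<subseteq> D" "(R, as) \<in> apply_view \<tau>' V M"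
  shows "(R, as) \<in> apply_view \<tau>' (sjf_view fs) (encode \<tau>' V \<D> fs D)"
proof -
  let ?E = "encode \<tau>' V \<D> fs D"
  have R: "R \<in> \<tau>'" "length as = arity R" using M(3) by (simp_all add: mem_apply_view_iff)
  define bs where "bs = indicator_list fs M"
  have tagged: "(tagged_rel (length fs) R, as @ bs) \<in> ?E"
    unfolding tagged_rel_mem_encode bs_def using M by blast
  then have adom: "set (as @ bs) \<subseteq> adom ?E" by (auto intro: adomI)
  have "(fact_rel (fs ! i), [bs ! i]) \<in> ?E" if "i < length fs" for i
  proof (cases "fs ! i \<in> M")
    case True
    then have "fs ! i \<in> D" using M(2) by blast
    then show ?thesis using True that by (simp add: bs_def indicator_list_def encode_def)
  next
    case False
    then show ?thesis using that by (simp add: bs_def indicator_list_def encode_def)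
  qed
  then have "sat (adom ?E) ?E (assign [0..<arity R] as) (snd (sjf_view fs R))"
    unfolding sat_sjf_view[OF R(2)] using tagged adom by (intro exI[of _ bs]) (simp add: bs_def)
  then show ?thesis
    using R adom by (simp add: mem_apply_view_iff)
qed

lemma apply_sjf_view_encode:
  assumes V: "is_view is_ucq \<tau> \<tau>' V" and "\<Union>\<D> \<subseteq> set fs" and "D \<in> \<D>"
  shows "apply_view \<tau>' (sjf_view fs) (encode \<tau>' V \<D> fs D) = apply_view \<tau>' V D"
proof (intro equalityI subrelI)
  fix R as
  assume "(R, as) \<in> apply_view \<tau>' (sjf_view fs) (encode \<tau>' V \<D> fs D)"
  then obtain M where "M \<subseteq> D" "(R, as) \<in> apply_view \<tau>' V M"
    using mem_apply_sjf_view_encodeD[OF assms(2)] by blast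
  then show "(R, as) \<in> apply_view \<tau>' V D" using apply_view_ucq_mono[OF V] by blast
next
  fix R as
  assume "(R, as) \<in> apply_view \<tau>' V D"
  then show "(R, as) \<in> apply_view \<tau>' (sjf_view fs) (encode \<tau>' V \<D> fs D)"
    by (rule mem_apply_sjf_view_encodeI[OF \<open>D \<in> \<D>\<close> order_refl])
qed

lemma is_view_sjf_view:
  assumes "schema \<tau>'" and "distinct fs"
  shows "is_view is_sjfcq (encoded_schema \<tau>' fs) \<tau>' (sjf_view fs)"
  unfolding is_view_def
proof (intro conjI ballI)
  fix R assume "R \<in> \<tau>'"
  have rels: "rels (snd (sjf_view fs R)) = map fact_rel fs @ [tagged_rel (length fs) R]"
    by (simp add: sjf_view_def sjf_body_def comp_def concat_map_singleton, intro nth_equalityI) auto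
  show "is_sjfcq (snd (sjf_view fs R))"
    unfolding is_sjfcq_def rels using \<open>distinct fs\<close>
    by (auto simp: sjf_view_def sjf_body_def distinct_map inj_on_def)
  show "wf_fml (encoded_schema \<tau>' fs) (snd (sjf_view fs R))"
    using \<open>R \<in> \<tau>'\<close> by (auto simp: sjf_view_def sjf_body_def encoded_schema_def)
  show "fv (snd (sjf_view fs R)) \<subseteq> set (fst (sjf_view fs R))"
    by (auto simp: sjf_view_def sjf_body_def)
qed (use assms(1) in \<open>simp_all add: sjf_view_def\<close>)

lemma ti_fin_encode:
  assumes ti: "ti_fin \<tau> \<D> P" and "schema \<tau>'" and "\<Union>\<D> \<subseteq> set fs"
  shows "ti_fin (encoded_schema \<tau>' fs) (encode \<tau>' V \<D> fs ` \<D>) (map_pmf (encode \<tau>' V \<D> fs) P)"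
proof -
  have "finite \<D>" and "tuple_independent P" and "\<D> \<noteq> {}" and "set_pmf P \<subseteq> \<D>"
    and inst: "\<forall>D\<in>\<D>. instance_over \<tau> D"
    using ti unfolding ti_fin_def pdb_def by auto
  have "finite (view_table \<tau>' V \<D> fs)"
    using assms(2) \<open>finite \<D>\<close> inst
    by (intro finite_view_table) (auto simp: schema_def instance_over_def)
  moreover have "view_table \<tau>' V \<D> fs \<subseteq> {f. fact_over (encoded_schema \<tau>' fs) f}"
    by (auto simp: view_table_def fact_over_def encoded_schema_def mem_apply_view_iff)
  ultimately have encoded_instances: "instance_over (encoded_schema \<tau>' fs) (encode \<tau>' V \<D> fs D)"
    if "D \<in> \<D>" for D
    using that inst assms(3)
    by (auto simp: instance_over_def encode_def fact_over_def encoded_schema_def)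
  have "schema (encoded_schema \<tau>' fs)"
    using assms(2) by (simp add: schema_def encoded_schema_def)
  have "map_pmf (encode \<tau>' V \<D> fs) P =
      map_pmf ((\<union>) ((\<lambda>f. (fact_rel f, [0])) ` set fs \<union> view_table \<tau>' V \<D> fs))
        (map_pmf ((`) (\<lambda>f. (fact_rel f, [1]))) P)"
    unfolding map_pmf_comp by (rule map_pmf_cong) (simp_all add: encode_def)
  moreover have "inj (\<lambda>f. (fact_rel f, [1::nat]))" by (simp add: inj_def)
  ultimately have "tuple_independent (map_pmf (encode \<tau>' V \<D> fs) P)"
    using \<open>tuple_independent P\<close> by (metis tuple_independent_map_union tuple_independent_map_image)
  with encoded_instances \<open>schema (encoded_schema \<tau>' fs)\<close> show ?thesis
    using \<open>finite \<D>\<close> \<open>\<D> \<noteq> {}\<close> \<open>set_pmf P \<subseteq> \<D>\<close> by (auto simp: ti_fin_def pdb_def countable_finite)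
qed

lemma L_TI_fin_ucq_subset_sjfcq: "L_TI_fin is_ucq \<subseteq> L_TI_fin is_sjfcq"
proof
  fix X assume "X \<in> L_TI_fin is_ucq"
  then obtain \<tau>' \<tau> \<D> P V where X: "X = (\<tau>', apply_view \<tau>' V ` \<D>, map_pmf (apply_view \<tau>' V) P)"
    and ti: "ti_fin \<tau> \<D> P" and V: "is_view is_ucq \<tau> \<tau>' V"
    unfolding L_TI_fin_def by blast
  have "finite (\<Union>\<D>)" using ti unfolding ti_fin_def pdb_def instance_over_def by auto
  then obtain fs where fs: "set fs = \<Union>\<D>" "distinct fs" using finite_distinct_list by blast
  have "schema \<tau>'" using V unfolding is_view_def by blast
  let ?E = "encode \<tau>' V \<D> fs" and ?W = "sjf_view fs"
  have views_agree: "apply_view \<tau>' ?W (?E D) = apply_view \<tau>' V D" if "D \<in> \<D>" for D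
    using apply_sjf_view_encode[OF V _ that] fs(1) by simp
  then have "apply_view \<tau>' ?W ` ?E ` \<D> = apply_view \<tau>' V ` \<D>"
    by (simp add: image_image)
  moreover have "map_pmf (apply_view \<tau>' ?W) (map_pmf ?E P) = map_pmf (apply_view \<tau>' V) P"
    using views_agree ti unfolding map_pmf_comp ti_fin_def pdb_def by (intro map_pmf_cong) auto
  ultimately have "X = (\<tau>', apply_view \<tau>' ?W ` ?E ` \<D>, map_pmf (apply_view \<tau>' ?W) (map_pmf ?E P))"
    using X by simp
  then show "X \<in> L_TI_fin is_sjfcq"
    using ti_fin_encode[OF ti \<open>schema \<tau>'\<close>] is_view_sjf_view[OF \<open>schema \<tau>'\<close> fs(2)] fs(1)
    unfolding L_TI_fin_def by blast
qed

theorem corollary7p4: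
  shows "L_TI_fin is_sjfcq = L_TI_fin is_cq \<and> L_TI_fin is_cq = L_TI_fin is_ucq"
proof -
  have "L_TI_fin is_sjfcq \<subseteq> L_TI_fin is_cq" by (rule L_TI_fin_mono) (simp add: is_sjfcq_def)
  moreover have "L_TI_fin is_cq \<subseteq> L_TI_fin is_ucq" by (rule L_TI_fin_mono) (rule is_ucq_if_is_cq)
  ultimately show ?thesis using L_TI_fin_ucq_subset_sjfcq by blast
qed

end
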